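(* Let $(\mathcal{A},\tau,\tau',t)$ be a real infinitesimal probability space in which both $\tau$ and $\tau'$ are tracial, i.e. $\tau(ab)=\tau(ba)$ and $\tau'(ab)=\tau'(ba)$ for all $a,b\in\mathcal{A}$. Let $\mathcal{A}_1,\dots,\mathcal{A}_s\subseteq\mathcal{A}$ be unital symmetric subalgebras which are free with respect to $\tau$. Then $\mathcal{A}_1,\dots,\mathcal{A}_s$ are real infinitesimally free if and only if, for every $n\ge 1$ and all centred, cyclically alternating $a_1,\dots,a_n\in\mathcal{A}_1\cup\dots\cup\mathcal{A}_s$, the following hold: (i) if $n=2$ or $n$ is odd, then $\tau'(a_1\cdots a_n)=0$; (ii) if $n=2k\ge 4$ is even, then $\tau'(a_1\cdots a_n)=\tau(a_1a_{k+1}^t)\,\tau(a_2a_{k+2}^t)\cdots\tau(a_ka_n^t)$.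
   Context: A real infinitesimal probability space $(\mathcal{A},\tau,\tau',t)$ consists of a unital complex algebra $\mathcal{A}$, an involution $t$ written $a\mapsto a^t$ (linear, with $(ab)^t=b^ta^t$ and $(a^t)^t=a$), a linear functional $\tau:\mathcal{A}\to\mathbb{C}$ with $\tau(1)=1$ and $\tau(a^t)=\tau(a)$ for all $a$, and a linear functional $\tau':\mathcal{A}\to\mathbb{C}$ with $\tau'(1)=0$. A subalgebra $\mathcal{B}$ is symmetric if $b^t\in\mathcal{B}$ whenever $b\in\mathcal{B}$. Elements $a_1,\dots,a_n$ with $a_i\in\mathcal{A}_{j_i}$ are centred if $\tau(a_i)=0$ for all $i$; they are alternating if $j_1\ne j_2,\dots,j_{n-1}\ne j_n$, and cyclically alternating if in addition $j_n\ne j_1$. Unital symmetric subalgebras $\mathcal{A}_1,\dots,\mathcal{A}_s$ are real infinitesimally free if, whenever $a_1,\dots,a_n$ with $a_i\in\mathcal{A}_{j_i}$ are centred and alternating, we have: (1) $\tau(a_1\cdots a_n)=0$; (2) if $n=2$, $\tau'(a_1a_2)=0$; (3) if $n=2k-1\ge 3$, $\tau'(a_1\cdots a_n)=\tau(a_1a_n)\tau'(a_2\cdots a_{n-1})+\tau(a_1a_k^ta_n)\tau(a_2a_{k+1}^t)\cdots\tau(a_{k-1}a_{n-1}^t)$; (4) if $n=2k\ge4$, $\tau'(a_1\cdots a_n)=\tau(a_1a_n)\tau'(a_2\cdots a_{n-1})+\tau(a_1a_{k+1}^t)\tau(a_2a_{k+2}^t)\cdots\tau(a_ka_n^t)$.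 *)

theory Defs
  imports Complex_Main
begin

definition complex_algebra :: "(complex \<Rightarrow> 'a::ring_1 \<Rightarrow> 'a) \<Rightarrow> bool" where
  "complex_algebra sc \<longleftrightarrow> module sc \<and>
     (\<forall>c a b. sc c (a * b) = sc c a * b \<and> sc c (a * b) = a * sc c b)"

definition real_inf_prob_space ::
  "(complex \<Rightarrow> 'a::ring_1 \<Rightarrow> 'a) \<Rightarrow> ('a \<Rightarrow> complex) \<Rightarrow> ('a \<Rightarrow> complex) \<Rightarrow> ('a \<Rightarrow> 'a) \<Rightarrow> bool" where
  "real_inf_prob_space sc \<tau> \<tau>' t \<longleftrightarrow>
     complex_algebra sc \<and>
     \<comment> \<open>t is a (linear, anti-multiplicative, involutive) involution\<close>
     (\<forall>a b. t (a + b) = t a + t b) \<and> (\<forall>c a. t (sc c a) = sc c (t a)) \<and>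
     (\<forall>a b. t (a * b) = t b * t a) \<and> (\<forall>a. t (t a) = a) \<and>
     \<comment> \<open>\<tau> linear, unital, t-invariant\<close>
     (\<forall>a b. \<tau> (a + b) = \<tau> a + \<tau> b) \<and> (\<forall>c a. \<tau> (sc c a) = c * \<tau> a) \<and>
     \<tau> 1 = 1 \<and> (\<forall>a. \<tau> (t a) = \<tau> a) \<and>
     \<comment> \<open>\<tau>' linear with \<tau>'(1) = 0\<close>
     (\<forall>a b. \<tau>' (a + b) = \<tau>' a + \<tau>' b) \<and> (\<forall>c a. \<tau>' (sc c a) = c * \<tau>' a) \<and>
     \<tau>' 1 = 0"

definition tracial :: "('a::ring_1 \<Rightarrow> complex) \<Rightarrow> bool" where
  "tracial \<phi> \<longleftrightarrow> (\<forall>a b. \<phi> (a * b) = \<phi> (b * a))"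

definition unital_symmetric_subalgebra ::
  "(complex \<Rightarrow> 'a::ring_1 \<Rightarrow> 'a) \<Rightarrow> ('a \<Rightarrow> 'a) \<Rightarrow> 'a set \<Rightarrow> bool" where
  "unital_symmetric_subalgebra sc t B \<longleftrightarrow>
     1 \<in> B \<and> (\<forall>a\<in>B. \<forall>b\<in>B. a + b \<in> B \<and> a * b \<in> B) \<and>
     (\<forall>c. \<forall>a\<in>B. sc c a \<in> B) \<and> (\<forall>b\<in>B. t b \<in> B)"

text \<open>Elements a_1..a_n are the list xs (xs ! (i-1) = a_i), with a_i in the
subalgebra A (js ! (i-1)), indices among 1..s.\<close>

definition centred_alternating ::
  "('a \<Rightarrow> complex) \<Rightarrow> (nat \<Rightarrow> 'a set) \<Rightarrow> nat \<Rightarrow> nat list \<Rightarrow> 'a list \<Rightarrow> bool" where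
  "centred_alternating \<tau> A s js xs \<longleftrightarrow>
     length js = length xs \<and>
     (\<forall>i < length xs. js ! i \<in> {1..s} \<and> xs ! i \<in> A (js ! i) \<and> \<tau> (xs ! i) = 0) \<and>
     (\<forall>i. Suc i < length xs \<longrightarrow> js ! i \<noteq> js ! Suc i)"

definition centred_cyclically_alternating ::
  "('a \<Rightarrow> complex) \<Rightarrow> (nat \<Rightarrow> 'a set) \<Rightarrow> nat \<Rightarrow> nat list \<Rightarrow> 'a list \<Rightarrow> bool" where
  "centred_cyclically_alternating \<tau> A s js xs \<longleftrightarrow>
     centred_alternating \<tau> A s js xs \<and> length xs \<ge> 1 \<and>
     js ! (length xs - 1) \<noteq> js ! 0"

definition free_wrt ::
  "('a::ring_1 \<Rightarrow> complex) \<Rightarrow> (nat \<Rightarrow> 'a set) \<Rightarrow> nat \<Rightarrow> bool" where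
  "free_wrt \<tau> A s \<longleftrightarrow>
     (\<forall>js xs. centred_alternating \<tau> A s js xs \<and> length xs \<ge> 1 \<longrightarrow>
        \<tau> (prod_list xs) = 0)"

definition real_inf_free ::
  "('a::ring_1 \<Rightarrow> complex) \<Rightarrow> ('a \<Rightarrow> complex) \<Rightarrow> ('a \<Rightarrow> 'a) \<Rightarrow> (nat \<Rightarrow> 'a set) \<Rightarrow> nat \<Rightarrow> bool" where
  "real_inf_free \<tau> \<tau>' t A s \<longleftrightarrow>
     (\<forall>js xs. centred_alternating \<tau> A s js xs \<and> length xs \<ge> 1 \<longrightarrow>
        (let n = length xs in
          \<tau> (prod_list xs) = 0 \<and>
          (n = 2 \<longrightarrow> \<tau>' (prod_list xs) = 0) \<and>
          (odd n \<and> n \<ge> 3 \<longrightarrow>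
             (let k = (n + 1) div 2 in
               \<tau>' (prod_list xs) =
                 \<tau> (xs ! 0 * xs ! (n - 1)) * \<tau>' (prod_list (take (n - 2) (drop 1 xs)))
                 + \<tau> (xs ! 0 * t (xs ! (k - 1)) * xs ! (n - 1)) *
                   (\<Prod>i\<in>{1..k - 2}. \<tau> (xs ! i * t (xs ! (i + k - 1)))))) \<and>
          (even n \<and> n \<ge> 4 \<longrightarrow>
             (let k = n div 2 in
               \<tau>' (prod_list xs) =
                 \<tau> (xs ! 0 * xs ! (n - 1)) * \<tau>' (prod_list (take (n - 2) (drop 1 xs)))
                 + (\<Prod>i<k. \<tau> (xs ! i * t (xs ! (i + k))))))))"

end

(*
  If the first and last letters of a centred alternating word a_1 ... a_n lie in
  different algebras, freeness kills tau(a_1 a_n) and, for n = 2k - 1,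
  tau(a_1 a_k^t a_n), so the recursion defining real infinitesimal freeness
  reduces to the cyclic identities.

  If they lie in the same algebra, traciality of tau' moves a_n to the front, and
  centring b = a_n a_1 gives
    tau'(a_1 ... a_n) = tau'(b' a_2 ... a_(n-1)) + tau(a_1 a_n) tau'(a_2 ... a_(n-1)),
  where b' = b - tau(b) 1 and b' a_2 ... a_(n-1) is centred and cyclically
  alternating of length n - 1.  For n odd, the cyclic identity for this shorter
  word is the required correction term, because tau(b' a_k^t) = tau(a_1 a_k^t a_n).
  For n = 2k even, the shorter word has odd length, so its tau' vanishes, and so does
  the pairing product: either a_1 and a_(k+1), or a_k and a_n, lie in different
  algebras.
*)
theory Submission
  imports Defs
begin

lemma centred_alternating_iff:
  "centred_alternating \<tau> A s js xs \<longleftrightarrow>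
     list_all2 (\<lambda>j x. j \<in> {1..s} \<and> x \<in> A j \<and> \<tau> x = 0) js xs \<and> successively (\<noteq>) js"
  by (auto simp: centred_alternating_def list_all2_conv_all_nth successively_conv_nth)

lemma centred_alternating_nthD:
  assumes "centred_alternating \<tau> A s js xs" "i < length xs"
  shows "js ! i \<in> {1..s}" "xs ! i \<in> A (js ! i)" "\<tau> (xs ! i) = 0"
  using assms by (simp_all add: centred_alternating_def)

lemma list_split_first_last:
  assumes "2 \<le> length xs"
  obtains a mid z where "xs = a # mid @ [z]"
proof -
  from assms obtain a ys where "xs = a # ys" "ys \<noteq> []"
    by (cases xs) (auto simp: Suc_le_eq)
  then show thesis
    using that[of a "butlast ys" "last ys"] by simp
qed

lemma prod_lessThan_eq_head_times:
  fixes f :: "nat \<Rightarrow> 'a::comm_monoid_mult"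
  assumes "0 < n"
  shows "(\<Prod>i<n. f i) = f 0 * (\<Prod>i\<in>{1..n - 1}. f i)"
proof -
  obtain m where n: "n = Suc m"
    using assms gr0_implies_Suc by blast
  then have "(\<Prod>i<n. f i) = f 0 * (\<Prod>i<m. f (Suc i))"
    by (simp only: prod.lessThan_Suc_shift)
  also have "(\<Prod>i<m. f (Suc i)) = (\<Prod>i\<in>{1..n - 1}. f i)"
    using prod.atLeast1_atMost_eq[of f m] n by simp
  finally show ?thesis .
qed

locale real_inf_space =
  fixes sc :: "complex \<Rightarrow> 'a::ring_1 \<Rightarrow> 'a"
    and \<tau> \<tau>' :: "'a \<Rightarrow> complex" and t :: "'a \<Rightarrow> 'a"
  assumes real_inf_prob_space: "real_inf_prob_space sc \<tau> \<tau>' t"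
begin

lemma scale_module: "module sc"
  using real_inf_prob_space by (simp add: real_inf_prob_space_def complex_algebra_def)

lemma scale_eq_mult: "sc c x = sc c 1 * x"
  using real_inf_prob_space unfolding real_inf_prob_space_def complex_algebra_def
  by (metis mult_1)

lemma tau_add: "\<tau> (a + b) = \<tau> a + \<tau> b"
  and tau_scale: "\<tau> (sc c a) = c * \<tau> a"
  and tau_one: "\<tau> 1 = 1"
  and tau_transpose: "\<tau> (t a) = \<tau> a"
  and tau'_add: "\<tau>' (a + b) = \<tau>' a + \<tau>' b"
  and tau'_scale: "\<tau>' (sc c a) = c * \<tau>' a"
  using real_inf_prob_space by (simp_all add: real_inf_prob_space_def)

lemma tau_diff: "\<tau> (a - b) = \<tau> a - \<tau> b"
  using tau_add[of "a - b" b] by simp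

definition centre :: "'a \<Rightarrow> 'a" where
  "centre x = x - sc (\<tau> x) 1"

lemma tau_centre: "\<tau> (centre x) = 0"
  by (simp add: centre_def tau_diff tau_scale tau_one)

lemma mult_eq_centre_mult: "x * y = centre x * y + sc (\<tau> x) y"
  by (simp add: centre_def algebra_simps scale_eq_mult[of _ y])

lemma tau_centre_mult: "\<tau> (centre x * y) = \<tau> (x * y) - \<tau> x * \<tau> y"
  using mult_eq_centre_mult[of x y] by (simp add: tau_add tau_scale)

lemma tau'_mult_centre: "\<tau>' (x * y) = \<tau>' (centre x * y) + \<tau> x * \<tau>' y"
  using mult_eq_centre_mult[of x y] by (simp add: tau'_add tau'_scale)

definition cyclic_moment_identities :: "'a list \<Rightarrow> bool" where
  "cyclic_moment_identities xs \<longleftrightarrow> (let n = length xs in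
     ((n = 2 \<or> odd n) \<longrightarrow> \<tau>' (prod_list xs) = 0) \<and>
     (even n \<and> n \<ge> 4 \<longrightarrow>
        \<tau>' (prod_list xs) = (\<Prod>i < n div 2. \<tau> (xs ! i * t (xs ! (i + n div 2))))))"

definition inf_free_moment_identities :: "'a list \<Rightarrow> bool" where
  "inf_free_moment_identities xs \<longleftrightarrow> (let n = length xs in
     \<tau> (prod_list xs) = 0 \<and>
     (n = 2 \<longrightarrow> \<tau>' (prod_list xs) = 0) \<and>
     (odd n \<and> n \<ge> 3 \<longrightarrow>
        (let k = (n + 1) div 2 in
          \<tau>' (prod_list xs) =
            \<tau> (xs ! 0 * xs ! (n - 1)) * \<tau>' (prod_list (take (n - 2) (drop 1 xs)))
            + \<tau> (xs ! 0 * t (xs ! (k - 1)) * xs ! (n - 1)) *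
              (\<Prod>i\<in>{1..k - 2}. \<tau> (xs ! i * t (xs ! (i + k - 1)))))) \<and>
     (even n \<and> n \<ge> 4 \<longrightarrow>
        (let k = n div 2 in
          \<tau>' (prod_list xs) =
            \<tau> (xs ! 0 * xs ! (n - 1)) * \<tau>' (prod_list (take (n - 2) (drop 1 xs)))
            + (\<Prod>i<k. \<tau> (xs ! i * t (xs ! (i + k)))))))"

lemma real_inf_free_iff_moment_identities:
  "real_inf_free \<tau> \<tau>' t A s \<longleftrightarrow>
     (\<forall>js xs. centred_alternating \<tau> A s js xs \<and> 1 \<le> length xs \<longrightarrow> inf_free_moment_identities xs)"
  unfolding real_inf_free_def inf_free_moment_identities_def ..

end

locale tracial_real_inf_space = real_inf_space +
  assumes tracial_tau: "tracial \<tau>" and tracial_tau': "tracial \<tau>'"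
begin

lemma tau_commute: "\<tau> (a * b) = \<tau> (b * a)"
  using tracial_tau by (simp add: tracial_def)

lemma tau'_commute: "\<tau>' (a * b) = \<tau>' (b * a)"
  using tracial_tau' by (simp add: tracial_def)

lemma tau_centre_rotate: "\<tau> (centre (z * a) * y) = \<tau> (a * y * z) - \<tau> (a * z) * \<tau> y"
  by (metis tau_centre_mult tau_commute mult.assoc)

lemma tau'_prod_list_rotate:
  "\<tau>' (prod_list (a # xs @ [z])) =
     \<tau>' (prod_list (centre (z * a) # xs)) + \<tau> (a * z) * \<tau>' (prod_list xs)"
proof -
  have "\<tau>' (prod_list (a # xs @ [z])) = \<tau>' (z * a * prod_list xs)"
    using tau'_commute[of "a * prod_list xs" z] by (simp add: mult.assoc)
  also have "\<dots> = \<tau>' (centre (z * a) * prod_list xs) + \<tau> (z * a) * \<tau>' (prod_list xs)"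
    by (rule tau'_mult_centre)
  finally show ?thesis by (simp add: tau_commute[of z a])
qed

end

locale tracial_free_family = tracial_real_inf_space +
  fixes A :: "nat \<Rightarrow> 'a set" and s :: nat
  assumes subalgebra: "\<And>j. j \<in> {1..s} \<Longrightarrow> unital_symmetric_subalgebra sc t (A j)"
    and free: "free_wrt \<tau> A s"
begin

lemma subalgebra_closed:
  assumes "j \<in> {1..s}" "x \<in> A j" "y \<in> A j"
  shows "1 \<in> A j" "x * y \<in> A j" "x + y \<in> A j" "sc c x \<in> A j" "t x \<in> A j"
  using subalgebra[OF assms(1)] assms(2,3) by (auto simp: unital_symmetric_subalgebra_def)

lemma subalgebra_diff:
  assumes "j \<in> {1..s}" "x \<in> A j" "y \<in> A j"
  shows "x - y \<in> A j"
proof -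
  have "sc (-1) y = - y"
    using module.scale_minus_left[OF scale_module] module.scale_one[OF scale_module] by metis
  then have "- y \<in> A j"
    using subalgebra_closed(4)[OF assms(1,3,3)] by metis
  then show ?thesis
    using subalgebra_closed(3)[OF assms(1,2)] by (simp only: diff_conv_add_uminus)
qed

lemma centre_mem:
  assumes "j \<in> {1..s}" "x \<in> A j"
  shows "centre x \<in> A j"
  unfolding centre_def
  using assms subalgebra_closed subalgebra_diff by metis

lemma tau_prod_list_centred_alternating:
  assumes "centred_alternating \<tau> A s js xs" "1 \<le> length xs"
  shows "\<tau> (prod_list xs) = 0"
  using free assms unfolding free_wrt_def by blast

lemma free_tau_mult_eq_0:
  assumes "i \<in> {1..s}" "j \<in> {1..s}" "i \<noteq> j" "x \<in> A i" "y \<in> A j" "\<tau> y = 0"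
  shows "\<tau> (x * y) = 0"
proof -
  have "centred_alternating \<tau> A s [i, j] [centre x, y]"
    using assms centre_mem tau_centre by (simp add: centred_alternating_iff)
  then have "\<tau> (centre x * y) = 0"
    using tau_prod_list_centred_alternating by fastforce
  then show ?thesis
    using assms(6) by (simp add: tau_centre_mult)
qed

lemma free_tau_mult3_eq_0:
  assumes "i \<in> {1..s}" "j \<in> {1..s}" "k \<in> {1..s}" "i \<noteq> k"
    and "x \<in> A i" "y \<in> A j" "z \<in> A k" "\<tau> x = 0" "\<tau> y = 0" "\<tau> z = 0"
  shows "\<tau> (x * y * z) = 0"
proof -
  consider "j = i" | "j = k" | "j \<noteq> i" "j \<noteq> k" by blast
  then show ?thesis
  proof cases
    case 1
    then show ?thesis
      using assms free_tau_mult_eq_0[of i k "x * y" z] subalgebra_closed(2) by auto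
  next
    case 2
    then have "\<tau> (y * z * x) = 0"
      using assms free_tau_mult_eq_0[of k i "y * z" x] subalgebra_closed(2) by auto
    then show ?thesis
      by (metis tau_commute mult.assoc)
  next
    case 3
    then have "centred_alternating \<tau> A s [i, j, k] [x, y, z]"
      using assms by (simp add: centred_alternating_iff)
    then show ?thesis
      using tau_prod_list_centred_alternating by (fastforce simp: mult.assoc)
  qed
qed

lemma tau_mult_transpose_eq_0:
  assumes "centred_alternating \<tau> A s js xs" "i < length xs" "l < length xs" "js ! i \<noteq> js ! l"
  shows "\<tau> (xs ! i * t (xs ! l)) = 0"
  using assms free_tau_mult_eq_0 subalgebra_closed(5) tau_transpose centred_alternating_nthD
  by metis

lemma centred_cyclically_alternating_rotate:
  assumes "centred_alternating \<tau> A s (j # js @ [j]) (a # xs @ [z])"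
  shows "centred_cyclically_alternating \<tau> A s (j # js) (centre (z * a) # xs)"
proof -
  let ?P = "\<lambda>j x. j \<in> {1..s} \<and> x \<in> A j \<and> \<tau> x = 0"
  have all: "list_all2 ?P (j # js @ [j]) (a # xs @ [z])"
    and succ: "successively (\<noteq>) ((j # js) @ [j])"
    using assms by (simp_all add: centred_alternating_iff)
  then have len: "length js = length xs"
    by (auto dest: list_all2_lengthD)
  then have "?P j a" "?P j z" "list_all2 ?P js xs"
    using all by (simp_all add: list_all2_append)
  then have "list_all2 ?P (j # js) (centre (z * a) # xs)"
    by (simp add: centre_mem subalgebra_closed(2) tau_centre)
  moreover have "successively (\<noteq>) (j # js)" "last (j # js) \<noteq> j"
    using succ unfolding successively_append_iff by simp_all
  ultimately show ?thesis
    using len last_conv_nth[of "j # js"]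
    by (simp add: centred_cyclically_alternating_def centred_alternating_iff)
qed

lemma tau'_prod_list_cyclic_even:
  assumes "centred_cyclically_alternating \<tau> A s js xs" "cyclic_moment_identities xs"
    and "even (length xs)"
  shows "\<tau>' (prod_list xs) = (\<Prod>i < length xs div 2. \<tau> (xs ! i * t (xs ! (i + length xs div 2))))"
proof -
  have alt: "centred_alternating \<tau> A s js xs" and "1 \<le> length xs"
    and ends: "js ! (length xs - 1) \<noteq> js ! 0"
    using assms(1) by (simp_all add: centred_cyclically_alternating_def)
  have "length xs = 2 \<or> 4 \<le> length xs"
    using \<open>1 \<le> length xs\<close> assms(3) by presburger
  then consider "length xs = 2" | "4 \<le> length xs"
    by blast
  then show ?thesis
  proof cases
    case 1
    then have "\<tau> (xs ! 0 * t (xs ! 1)) = 0"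
      using tau_mult_transpose_eq_0[OF alt] ends by simp
    then show ?thesis
      using assms(2) 1 by (simp add: cyclic_moment_identities_def)
  next
    case 2
    then show ?thesis
      using assms(2,3) by (simp add: cyclic_moment_identities_def Let_def)
  qed
qed

lemma pairing_product_eq_0:
  assumes alt: "centred_alternating \<tau> A s js xs" and len: "length xs = 2 * k" "0 < k"
    and ends: "js ! 0 = js ! (2 * k - 1)"
  shows "(\<Prod>i<k. \<tau> (xs ! i * t (xs ! (i + k)))) = 0"
proof (cases "js ! 0 = js ! k")
  case False
  then have "\<tau> (xs ! 0 * t (xs ! (0 + k))) = 0"
    using tau_mult_transpose_eq_0[OF alt] len by simp
  then show ?thesis
    using len(2) by (metis finite_lessThan lessThan_iff prod_zero)
next
  case True
  have "Suc (k - 1) < length xs"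
    using len by simp
  then have "js ! (k - 1) \<noteq> js ! Suc (k - 1)"
    using alt unfolding centred_alternating_def by blast
  then have "js ! (k - 1) \<noteq> js ! (k - 1 + k)"
    using True ends len(2) by (simp add: mult_2)
  then have "\<tau> (xs ! (k - 1) * t (xs ! (k - 1 + k))) = 0"
    using tau_mult_transpose_eq_0[OF alt] len by simp
  then show ?thesis
    using len(2) by (metis finite_lessThan lessThan_iff diff_less zero_less_one prod_zero)
qed

lemma inf_free_iff_cyclic_moment_identities:
  assumes "centred_cyclically_alternating \<tau> A s js xs"
  shows "inf_free_moment_identities xs \<longleftrightarrow> cyclic_moment_identities xs"
proof -
  let ?n = "length xs"
  have alt: "centred_alternating \<tau> A s js xs" and "1 \<le> ?n"
    and ends: "js ! (?n - 1) \<noteq> js ! 0"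
    using assms by (simp_all add: centred_cyclically_alternating_def)
  then have "2 \<le> ?n"
    by (cases "?n = 1") auto
  then have pos: "0 < ?n" "?n - 1 < ?n" "(?n + 1) div 2 - 1 < ?n"
    by auto
  note first = centred_alternating_nthD[OF alt pos(1)]
    and last = centred_alternating_nthD[OF alt pos(2)]
    and middle = centred_alternating_nthD[OF alt pos(3)]
  have "\<tau> (prod_list xs) = 0"
    using tau_prod_list_centred_alternating[OF alt \<open>1 \<le> ?n\<close>] .
  moreover have "\<tau> (xs ! 0 * xs ! (?n - 1)) = 0"
    by (rule free_tau_mult_eq_0[OF first(1) last(1) ends[symmetric] first(2) last(2,3)])
  moreover have "\<tau> (xs ! 0 * t (xs ! ((?n + 1) div 2 - 1)) * xs ! (?n - 1)) = 0"
    using middle(3) tau_transpose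
    by (intro free_tau_mult3_eq_0[OF first(1) middle(1) last(1) ends[symmetric] first(2)
          subalgebra_closed(5)[OF middle(1,2,2)] last(2) first(3) _ last(3)]) simp
  ultimately show ?thesis
    using \<open>2 \<le> ?n\<close>
    by (auto simp: inf_free_moment_identities_def cyclic_moment_identities_def Let_def)
qed

lemma tau'_prod_list_rotate_odd:
  fixes a z :: 'a and xs :: "'a list"
  defines "L \<equiv> a # xs @ [z]" and "k \<equiv> (length xs + 3) div 2"
  assumes alt: "centred_alternating \<tau> A s (j # js @ [j]) L" and odd: "odd (length L)"
    and cyc: "cyclic_moment_identities (centre (z * a) # xs)"
  shows "\<tau>' (prod_list L) = \<tau> (a * z) * \<tau>' (prod_list xs)
    + \<tau> (a * t (L ! (k - 1)) * z) * (\<Prod>i\<in>{1..k - 2}. \<tau> (L ! i * t (L ! (i + k - 1))))"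
proof -
  define ys where "ys = centre (z * a) # xs"
  define h where "h = length ys div 2"
  have ys_cyc: "centred_cyclically_alternating \<tau> A s (j # js) ys"
    using centred_cyclically_alternating_rotate alt by (simp add: ys_def L_def)
  have len: "length ys = 2 * h" "h = k - 1" "0 < h" "2 * h = length xs + 1"
    using odd by (simp_all add: h_def ys_def k_def L_def) presburger+
  have ys_L: "ys ! i = L ! i" if "0 < i" "i \<le> length xs" for i
    using that by (cases i) (simp_all add: ys_def L_def nth_append)
  have "\<tau>' (prod_list ys) = (\<Prod>i<h. \<tau> (ys ! i * t (ys ! (i + h))))"
    unfolding h_def using ys_cyc cyc[folded ys_def] len(1) by (intro tau'_prod_list_cyclic_even) simp_all
  also have "\<dots> = \<tau> (ys ! 0 * t (ys ! h)) * (\<Prod>i\<in>{1..h - 1}. \<tau> (ys ! i * t (ys ! (i + h))))"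
    by (simp add: prod_lessThan_eq_head_times[OF len(3)])
  also have "\<dots> = \<tau> (a * t (L ! (k - 1)) * z) * (\<Prod>i\<in>{1..k - 2}. \<tau> (L ! i * t (L ! (i + k - 1))))"
  proof -
    have "h < length L"
      using len by (simp add: L_def)
    then have "\<tau> (t (L ! h)) = 0"
      using centred_alternating_nthD(3)[OF alt] tau_transpose by simp
    then have "\<tau> (ys ! 0 * t (ys ! h)) = \<tau> (a * t (L ! (k - 1)) * z)"
      using ys_L[of h] len by (simp add: ys_def tau_centre_rotate)
    moreover have "(\<Prod>i\<in>{1..h - 1}. \<tau> (ys ! i * t (ys ! (i + h)))) =
        (\<Prod>i\<in>{1..k - 2}. \<tau> (L ! i * t (L ! (i + k - 1))))"
      using ys_L len by (intro prod.cong) auto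
    ultimately show ?thesis
      by simp
  qed
  finally show ?thesis
    using tau'_prod_list_rotate[of a xs z] by (simp add: ys_def L_def)
qed

lemma tau'_prod_list_rotate_even:
  fixes a z :: 'a and xs :: "'a list"
  defines "L \<equiv> a # xs @ [z]" and "k \<equiv> (length xs + 2) div 2"
  assumes alt: "centred_alternating \<tau> A s (j # js @ [j]) L" and even: "even (length L)"
    and cyc: "cyclic_moment_identities (centre (z * a) # xs)"
  shows "\<tau>' (prod_list L) = \<tau> (a * z) * \<tau>' (prod_list xs) + (\<Prod>i<k. \<tau> (L ! i * t (L ! (i + k))))"
proof -
  have "\<tau>' (prod_list (centre (z * a) # xs)) = 0"
    using cyc even by (simp add: L_def cyclic_moment_identities_def)
  moreover have "(\<Prod>i<k. \<tau> (L ! i * t (L ! (i + k)))) = 0"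
  proof -
    have len: "length L = 2 * k" "0 < k"
      using even by (simp_all add: L_def k_def)
    have "length js = length xs"
      using alt by (simp add: L_def centred_alternating_def)
    then have "2 * k - 1 = Suc (length js)"
      using len(1) by (simp add: L_def)
    then have last_j: "(j # js @ [j]) ! (2 * k - 1) = j"
      by (simp add: nth_append)
    show ?thesis
      by (rule pairing_product_eq_0[OF alt len]) (simp only: last_j nth_Cons_0)
  qed
  ultimately show ?thesis
    using tau'_prod_list_rotate[of a xs z] by (simp add: L_def)
qed

lemma inf_free_moment_identities_rotate:
  assumes alt: "centred_alternating \<tau> A s (j # js @ [j]) (a # xs @ [z])"
    and cyc: "cyclic_moment_identities (centre (z * a) # xs)"
  shows "inf_free_moment_identities (a # xs @ [z])"
proof -
  let ?L = "a # xs @ [z]"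
  let ?n = "length ?L"
  have "xs \<noteq> []"
    using alt by (auto simp: centred_alternating_iff dest: list_all2_lengthD)
  have ends: "?L ! 0 = a" "?L ! (?n - 1) = z" "take (?n - 2) (drop 1 ?L) = xs"
    by (simp_all add: nth_append)
  have "\<tau>' (prod_list ?L) =
      \<tau> (?L ! 0 * ?L ! (?n - 1)) * \<tau>' (prod_list (take (?n - 2) (drop 1 ?L)))
      + \<tau> (?L ! 0 * t (?L ! ((?n + 1) div 2 - 1)) * ?L ! (?n - 1)) *
        (\<Prod>i\<in>{1..(?n + 1) div 2 - 2}. \<tau> (?L ! i * t (?L ! (i + (?n + 1) div 2 - 1))))"
    if "odd ?n"
  proof -
    have k: "(?n + 1) div 2 = (length xs + 3) div 2"
      by simp
    show ?thesis
      unfolding ends k by (rule tau'_prod_list_rotate_odd[OF alt that cyc])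
  qed
  moreover have "\<tau>' (prod_list ?L) =
      \<tau> (?L ! 0 * ?L ! (?n - 1)) * \<tau>' (prod_list (take (?n - 2) (drop 1 ?L)))
      + (\<Prod>i<?n div 2. \<tau> (?L ! i * t (?L ! (i + ?n div 2))))"
    if "even ?n"
    unfolding ends using tau'_prod_list_rotate_even[OF alt that cyc] by (simp add: add.commute)
  moreover have "\<tau> (prod_list ?L) = 0"
    using tau_prod_list_centred_alternating[OF alt] by simp
  moreover have "?n \<noteq> 2"
    using \<open>xs \<noteq> []\<close> by simp
  ultimately show ?thesis
    unfolding inf_free_moment_identities_def Let_def by blast
qed

lemma inf_free_moment_identities_if_cyclic:
  assumes cyc: "\<And>js xs. centred_cyclically_alternating \<tau> A s js xs \<Longrightarrow> cyclic_moment_identities xs"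
    and alt: "centred_alternating \<tau> A s js xs" and len: "1 \<le> length xs"
  shows "inf_free_moment_identities xs"
proof (cases "js ! (length xs - 1) = js ! 0")
  case False
  then have "centred_cyclically_alternating \<tau> A s js xs"
    using alt len by (simp add: centred_cyclically_alternating_def)
  then show ?thesis
    using cyc inf_free_iff_cyclic_moment_identities by blast
next
  case ends: True
  show ?thesis
  proof (cases "length xs = 1")
    case True
    then show ?thesis
      using tau_prod_list_centred_alternating[OF alt] by (simp add: inf_free_moment_identities_def)
  next
    case False
    have "length js = length xs"
      using alt by (simp add: centred_alternating_def)
    moreover have "2 \<le> length xs"
      using False len by simp
    ultimately obtain a mid z j jm j' where xs: "xs = a # mid @ [z]" and js: "js = j # jm @ [j']"
      by (metis list_split_first_last)
    moreover have "length jm = length mid"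
      using \<open>length js = length xs\<close> by (simp add: xs js)
    ultimately have alt': "centred_alternating \<tau> A s (j # jm @ [j]) (a # mid @ [z])"
      using alt ends by (simp add: nth_append)
    show ?thesis
      using inf_free_moment_identities_rotate[OF alt'] cyc centred_cyclically_alternating_rotate[OF alt']
      by (simp add: xs)
  qed
qed

lemma real_inf_free_iff_cyclic_moment_identities:
  "real_inf_free \<tau> \<tau>' t A s \<longleftrightarrow>
     (\<forall>js xs. centred_cyclically_alternating \<tau> A s js xs \<longrightarrow> cyclic_moment_identities xs)"
proof
  assume "real_inf_free \<tau> \<tau>' t A s"
  then show "\<forall>js xs. centred_cyclically_alternating \<tau> A s js xs \<longrightarrow> cyclic_moment_identities xs"
    using inf_free_iff_cyclic_moment_identities real_inf_free_iff_moment_identities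
    by (auto simp: centred_cyclically_alternating_def)
next
  assume "\<forall>js xs. centred_cyclically_alternating \<tau> A s js xs \<longrightarrow> cyclic_moment_identities xs"
  then show "real_inf_free \<tau> \<tau>' t A s"
    using inf_free_moment_identities_if_cyclic real_inf_free_iff_moment_identities by blast
qed

end

theorem proposition3p4:
  fixes sc :: "complex \<Rightarrow> 'a::ring_1 \<Rightarrow> 'a"
    and \<tau> \<tau>' :: "'a \<Rightarrow> complex" and t :: "'a \<Rightarrow> 'a"
    and A :: "nat \<Rightarrow> 'a set" and s :: nat
  assumes "real_inf_prob_space sc \<tau> \<tau>' t"
    and "tracial \<tau>" and "tracial \<tau>'"
    and "\<And>j. j \<in> {1..s} \<Longrightarrow> unital_symmetric_subalgebra sc t (A j)"
    and "free_wrt \<tau> A s"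
  shows "real_inf_free \<tau> \<tau>' t A s \<longleftrightarrow>
    (\<forall>js xs. centred_cyclically_alternating \<tau> A s js xs \<longrightarrow>
       (let n = length xs in
         ((n = 2 \<or> odd n) \<longrightarrow> \<tau>' (prod_list xs) = 0) \<and>
         (even n \<and> n \<ge> 4 \<longrightarrow>
            \<tau>' (prod_list xs) = (\<Prod>i < n div 2. \<tau> (xs ! i * t (xs ! (i + n div 2)))))))"
proof -
  interpret tracial_free_family sc \<tau> \<tau>' t A s
    using assms by unfold_locales
  show ?thesis
    using real_inf_free_iff_cyclic_moment_identities unfolding cyclic_moment_identities_def .
qed

end
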